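(* Let $U=(u_1,\dots,u_d)$ be an orthonormal basis of $\mathbb{R}^d$, $d\ge2$, and let $x\in\mathbb{R}^d$ be random with two distinct indices $i,j$ chosen uniformly at random, $x_i,x_j$ independent uniform random signs $\pm1$, and $x_k=0$ otherwise; let $y=Ux$. Then $U$ is not a local maximum of $\max_{\Psi\in\mathcal D}\mathbb{E}_y\|\Psi^\star y\|_\infty^2$: for $U_\varepsilon=(u_1,\dots,u_{d-1},(u_d+\varepsilon u_1)/\sqrt{1+\varepsilon^2})$ and every $\varepsilon>0$ one has $\mathbb{E}_y\|U_\varepsilon^\star y\|_\infty^2>\mathbb{E}_y\|U^\star y\|_\infty^2=1$.
   Context: $\mathcal D$ is the set of $d\times d$ matrices with unit-norm columns; $\|\cdot\|_\infty$ is the maximum absolute entry. *)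

theory Defs
  imports "HOL-Analysis.Analysis" "HOL-Probability.Probability"
begin

definition linf :: "real^'n \<Rightarrow> real" where
  "linf v = Max (range (\<lambda>k. \<bar>v $ k\<bar>))"

definition unitcol_mats :: "(real^'n^'n) set" where
  "unitcol_mats = {P. \<forall>k. norm (column k P) = 1}"

text \<open>Sample space: ordered pair of distinct indices (i,j), uniform (equivalently a
  uniform unordered pair), together with two independent uniform signs.\<close>
definition sample_space :: "('n::finite \<times> 'n \<times> real \<times> real) set" where
  "sample_space = {(i, j, s, t). i \<noteq> j \<and> s \<in> {-1, 1} \<and> t \<in> {-1, 1}}"

definition vec_of_sample :: "'n \<times> 'n \<times> real \<times> real \<Rightarrow> real^'n" where
  "vec_of_sample = (\<lambda>(i, j, s, t). \<chi> k. if k = i then s else if k = j then t else 0)"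

definition x_dist :: "(real^'n::finite) pmf" where
  "x_dist = map_pmf vec_of_sample (pmf_of_set sample_space)"

definition objective :: "real^'n::finite^'n \<Rightarrow> real^'n^'n \<Rightarrow> real" where
  "objective U P = measure_pmf.expectation x_dist
      (\<lambda>x. (linf (transpose P *v (U *v x)))\<^sup>2)"

text \<open>U_eps: last column (index b) replaced by (u_b + eps u_a)/sqrt(1+eps^2).\<close>
definition perturb :: "real^'n^'n \<Rightarrow> 'n \<Rightarrow> 'n \<Rightarrow> real \<Rightarrow> real^'n^'n" where
  "perturb U a b \<epsilon> = (\<chi> r c. if c = b then (U $ r $ b + \<epsilon> * U $ r $ a) / sqrt (1 + \<epsilon>\<^sup>2)
                               else U $ r $ c)"

end

theory Submission
  imports Defs
begin

(* In the coordinates of the basis U the vector U^T y is just x, which has exactly two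
   entries +-1, so the objective at U is 1. Replacing u_b by (u_b + eps u_a)/sqrt(1+eps^2)
   changes only the b-th coordinate, into (x_b + eps x_a)/sqrt(1+eps^2). Whichever nonzero
   coordinate of x is not b still contributes 1, so no sample loses; and on the sample
   x_a = x_b = 1 the b-th coordinate is (1+eps)/sqrt(1+eps^2) > 1, so the average strictly
   increases. *)

lemma abs_le_linf: "\<bar>v $ k\<bar> \<le> linf v"
  unfolding linf_def by (rule Max_ge) auto

lemma linf_eq_1:
  assumes "\<And>k. \<bar>v $ k\<bar> \<le> 1" and "\<bar>v $ i\<bar> = 1"
  shows "linf v = 1"
  unfolding linf_def
proof (rule Max_eqI)
  show "1 \<in> range (\<lambda>k. \<bar>v $ k\<bar>)" using assms(2) by (metis rangeI)
qed (use assms(1) in auto)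

lemma transpose_mult_vec_nth: "(transpose P *v y) $ c = (\<Sum>r\<in>UNIV. P $ r $ c * y $ r)"
  by (simp add: matrix_vector_mult_def transpose_def)

lemma orthogonal_matrix_transpose_mult_vec:
  fixes U :: "real^'n^'n"
  assumes "orthogonal_matrix U"
  shows "transpose U *v (U *v x) = x"
proof -
  have "transpose U ** U = mat 1"
    using assms unfolding orthogonal_matrix .
  then show ?thesis
    by (metis matrix_vector_mul_assoc matrix_vector_mul_lid)
qed

lemma vec_of_sample_nth:
  "vec_of_sample (i, j, s, t) $ k = (if k = i then s else if k = j then t else 0)"
  by (simp add: vec_of_sample_def)

lemma finite_sample_space: "finite (sample_space :: ('n::finite \<times> 'n \<times> real \<times> real) set)"
proof (rule finite_subset)
  show "sample_space \<subseteq> (UNIV::'n set) \<times> (UNIV::'n set) \<times> {-1,1::real} \<times> {-1,1::real}"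
    by (auto simp: sample_space_def)
qed auto

lemma sample_space_memI: "a \<noteq> b \<Longrightarrow> (a, b, 1, 1) \<in> sample_space"
  by (simp add: sample_space_def)

lemma objective_eq_average:
  fixes U P :: "real^'n::finite^'n" and a b :: 'n
  assumes "a \<noteq> b"
  shows "objective U P =
    (\<Sum>w\<in>sample_space. (linf (transpose P *v (U *v vec_of_sample w)))\<^sup>2)
      / card (sample_space :: ('n \<times> 'n \<times> real \<times> real) set)"
proof -
  have "(sample_space :: ('n \<times> 'n \<times> real \<times> real) set) \<noteq> {}"
    using sample_space_memI[OF assms] by blast
  then show ?thesis
    unfolding objective_def x_dist_def
    using integral_pmf_of_set finite_sample_space by simp
qed

lemma linf_vec_of_sample: "w \<in> sample_space \<Longrightarrow> linf (vec_of_sample w) = 1"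
  by (cases w) (auto simp: sample_space_def vec_of_sample_nth intro!: linf_eq_1)

lemma objective_orthogonal_self:
  fixes U :: "real^'n::finite^'n"
  assumes "orthogonal_matrix U" and "CARD('n) \<ge> 2"
  shows "objective U U = 1"
proof -
  let ?S = "sample_space :: ('n \<times> 'n \<times> real \<times> real) set"
  have "\<not> CARD('n) \<le> Suc 0"
    using assms(2) by simp
  then obtain a b :: 'n where "a \<noteq> b"
    by (auto simp: card_le_Suc0_iff_eq)
  then have "card ?S > 0"
    using sample_space_memI finite_sample_space by (auto simp: card_gt_0_iff)
  moreover have "(\<Sum>w\<in>?S. (linf (transpose U *v (U *v vec_of_sample w)))\<^sup>2) = (\<Sum>w\<in>?S. 1)"
    by (rule sum.cong)
      (simp_all add: orthogonal_matrix_transpose_mult_vec[OF assms(1)] linf_vec_of_sample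
        del: transpose_matrix_vector)
  ultimately show ?thesis
    unfolding objective_eq_average[OF \<open>a \<noteq> b\<close>] by simp
qed

lemma transpose_perturb_mult_vec_nth:
  "(transpose (perturb U a b e) *v y) $ c =
     (if c = b then ((transpose U *v y) $ b + e * (transpose U *v y) $ a) / sqrt (1 + e\<^sup>2)
      else (transpose U *v y) $ c)"
proof (cases "c = b")
  case True
  have "(\<Sum>r\<in>UNIV. perturb U a b e $ r $ b * y $ r)
      = (\<Sum>r\<in>UNIV. (U $ r $ b * y $ r + e * (U $ r $ a * y $ r)) / sqrt (1 + e\<^sup>2))"
    by (rule sum.cong) (auto simp: perturb_def algebra_simps)
  then show ?thesis
    using True unfolding transpose_mult_vec_nth
    by (simp add: sum_divide_distrib[symmetric] sum.distrib sum_distrib_left)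
qed (simp add: transpose_mult_vec_nth perturb_def del: transpose_matrix_vector)

lemma transpose_perturb_orthogonal_mult_vec_nth:
  assumes "orthogonal_matrix U"
  shows "(transpose (perturb U a b e) *v (U *v x)) $ c =
     (if c = b then (x $ b + e * x $ a) / sqrt (1 + e\<^sup>2) else x $ c)"
  unfolding transpose_perturb_mult_vec_nth orthogonal_matrix_transpose_mult_vec[OF assms] ..

lemma perturb_in_unitcol_mats:
  fixes U :: "real^'n^'n"
  assumes "orthogonal_matrix U" and "a \<noteq> b"
  shows "perturb U a b e \<in> unitcol_mats"
proof -
  have cols: "(\<forall>i. norm (column i U) = 1) \<and>
      (\<forall>i j. i \<noteq> j \<longrightarrow> orthogonal (column i U) (column j U))"
    using assms(1) orthogonal_matrix_orthonormal_columns by auto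
  then have "orthogonal (column b U) (e *\<^sub>R column a U)"
    using assms(2) by (simp add: orthogonal_clauses)
  then have "(norm (column b U + e *\<^sub>R column a U))\<^sup>2 = 1 + e\<^sup>2"
    using cols by (simp add: norm_add_Pythagorean power_mult_distrib)
  then have norm_b: "norm (column b U + e *\<^sub>R column a U) = sqrt (1 + e\<^sup>2)"
    by (metis norm_ge_zero real_sqrt_unique)
  have "norm (column k (perturb U a b e)) = 1" for k
  proof (cases "k = b")
    case True
    have "column b (perturb U a b e)
        = (1 / sqrt (1 + e\<^sup>2)) *\<^sub>R (column b U + e *\<^sub>R column a U)"
      by (simp add: column_def perturb_def vec_eq_iff divide_inverse algebra_simps)
    moreover have "sqrt (1 + e\<^sup>2) > 0"
      by (simp add: add_pos_nonneg)
    ultimately show ?thesis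
      using True norm_b by simp
  next
    case False
    then have "column k (perturb U a b e) = column k U"
      by (simp add: column_def perturb_def)
    then show ?thesis
      using cols by simp
  qed
  then show ?thesis by (simp add: unitcol_mats_def)
qed

lemma one_lt_tilted_sum: "e > 0 \<Longrightarrow> 1 < (1 + e) / sqrt (1 + e\<^sup>2)"
proof -
  assume "e > 0"
  then have "sqrt (1 + e\<^sup>2) < sqrt ((1 + e)\<^sup>2)"
    by (intro real_sqrt_less_mono) (simp add: power2_eq_square algebra_simps)
  with \<open>e > 0\<close> show ?thesis
    by (simp add: less_divide_eq_1_pos add_pos_nonneg)
qed

lemma one_le_linf_perturb_sample:
  assumes "orthogonal_matrix U" and "w \<in> sample_space"
  shows "1 \<le> linf (transpose (perturb U a b e) *v (U *v vec_of_sample w))"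
proof -
  obtain i j s t where w: "w = (i, j, s, t)" and "i \<noteq> j" "s \<in> {-1,1}" "t \<in> {-1,1}"
    using assms(2) by (cases w) (auto simp: sample_space_def)
  have "\<exists>k. k \<noteq> b \<and> \<bar>vec_of_sample w $ k\<bar> = 1"
  proof (cases "i = b")
    case True
    with \<open>i \<noteq> j\<close> \<open>t \<in> {-1,1}\<close> show ?thesis
      by (intro exI[of _ j]) (auto simp: w vec_of_sample_nth)
  next
    case False
    with \<open>s \<in> {-1,1}\<close> show ?thesis
      by (intro exI[of _ i]) (auto simp: w vec_of_sample_nth)
  qed
  then obtain k where "k \<noteq> b" "\<bar>vec_of_sample w $ k\<bar> = 1"
    by blast
  then show ?thesis
    using abs_le_linf[of "transpose (perturb U a b e) *v (U *v vec_of_sample w)" k]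
    unfolding transpose_perturb_orthogonal_mult_vec_nth[OF assms(1)] by simp
qed

lemma one_lt_linf_perturb_sample:
  assumes "orthogonal_matrix U" and "a \<noteq> b" and "e > 0"
  shows "1 < linf (transpose (perturb U a b e) *v (U *v vec_of_sample (a, b, 1, 1)))"
proof -
  let ?v = "transpose (perturb U a b e) *v (U *v vec_of_sample (a, b, 1, 1))"
  have "?v $ b = (1 + e) / sqrt (1 + e\<^sup>2)"
    unfolding transpose_perturb_orthogonal_mult_vec_nth[OF assms(1)]
    using assms(2) by (simp add: vec_of_sample_nth)
  then show ?thesis
    using one_lt_tilted_sum[OF assms(3)] abs_le_linf[of ?v b] assms(3) by simp
qed

lemma objective_perturb_gt_1:
  fixes U :: "real^'n::finite^'n"
  assumes "orthogonal_matrix U" and "a \<noteq> b" and "e > 0"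
  shows "objective U (perturb U a b e) > 1"
proof -
  let ?S = "sample_space :: ('n \<times> 'n \<times> real \<times> real) set"
  let ?f = "\<lambda>w. (linf (transpose (perturb U a b e) *v (U *v vec_of_sample w)))\<^sup>2"
  have "(\<Sum>w\<in>?S. 1) < sum ?f ?S"
  proof (rule sum_strict_mono_ex1[OF finite_sample_space])
    show "\<forall>w\<in>?S. 1 \<le> ?f w"
      using one_le_linf_perturb_sample[OF assms(1)] one_le_power by blast
    show "\<exists>w\<in>?S. 1 < ?f w"
      using sample_space_memI[OF assms(2)] one_lt_linf_perturb_sample[OF assms] one_less_power
      by (metis zero_less_numeral)
  qed
  moreover have "card ?S > 0"
    using sample_space_memI[OF assms(2)] finite_sample_space by (auto simp: card_gt_0_iff)
  ultimately show ?thesis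
    unfolding objective_eq_average[OF assms(2)] by simp
qed

theorem mainTheorem8:
  fixes U :: "real^'n::finite^'n" and a b :: 'n
  assumes "CARD('n) \<ge> 2"
    and "orthogonal_matrix U"
    and "a \<noteq> b"
  shows "objective U U = 1 \<and>
         (\<forall>\<epsilon>>0. perturb U a b \<epsilon> \<in> unitcol_mats \<and>
                  objective U (perturb U a b \<epsilon>) > objective U U)"
  using objective_orthogonal_self[OF assms(2,1)] perturb_in_unitcol_mats[OF assms(2,3)]
    objective_perturb_gt_1[OF assms(2,3)]
  by simp

end
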